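(* Let $g\ge 1$, let $n\in\mathbb{Z}\setminus\{0\}$, and let $u_1,\dots,u_{2g+1}$ be pairwise distinct complex numbers, regarded as varying in a small open set. Consider the hyperelliptic curve $v^2=(u-u_1)\cdots(u-u_{2g+1})$. Let $\gamma$ be a closed cycle on this curve that avoids the branch points and the point at infinity, transported continuously as the $u_j$ vary. Define $$a_i=\oint_\gamma \frac{v^n\,du}{u-u_i},\qquad i=1,\dots,2g+1,$$ as functions of $(u_1,\dots,u_{2g+1})$. Then $$\frac{\partial a_i}{\partial u_j}=\frac{n}{2}\,\frac{a_i-a_j}{u_j-u_i}\quad\text{for all } i\neq j,\qquad\text{and}\qquad \sum_{i=1}^{2g+1}a_i=0.$$
   Context: The system in the conclusion is the upper triangular reduction of the rank two Schlesinger system. In this reduction all residue matrices have eigenvalues $\pm n/4$: $A^{(i)}=\begin{pmatrix} n/4 & a_i\\ 0 & -n/4\end{pmatrix}$. *)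

theory Defs
  imports "HOL-Analysis.Analysis"
begin

text \<open>Branch points are the coordinates of a vector u of type complex^'n
  (with CARD('n) = 2g+1).  The hyperelliptic curve is v^2 = branch_poly u z.\<close>

definition branch_poly :: "complex ^ 'n \<Rightarrow> complex \<Rightarrow> complex" where
  "branch_poly u z = (\<Prod>k\<in>UNIV. z - u $ k)"

definition vec_upd :: "complex ^ 'n \<Rightarrow> 'n \<Rightarrow> complex \<Rightarrow> complex ^ 'n" where
  "vec_upd u j w = (\<chi> k. if k = j then w else u $ k)"

text \<open>The cycle on the curve is given by its projection gamma (a closed path in the
  u-plane) together with a continuous lift V u t of v, i.e. (V u t)^2 = branch_poly u (gamma t).\<close>
definition period_integral ::
  "(real \<Rightarrow> complex) \<Rightarrow> (complex ^ 'n \<Rightarrow> real \<Rightarrow> complex) \<Rightarrow> int \<Rightarrow> 'n \<Rightarrow> complex ^ 'n \<Rightarrow> complex" where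
  "period_integral \<gamma> V n i u =
     integral {0..1} (\<lambda>t. (V u t) powi n * vector_derivative \<gamma> (at t) / (\<gamma> t - u $ i))"

end

theory Submission
  imports Defs "HOL-Complex_Analysis.Cauchy_Integral_Theorem"
begin

text \<open>
  Near each of its points, the lift of the cycle is a holomorphic branch \<open>\<psi>\<close> of the square root of
  the branch polynomial \<open>P\<close>, composed with \<open>\<gamma>\<close>. Since \<open>2 \<psi> \<psi>' = P' = P \<Sum>\<^sub>k 1 / (z - u\<^sub>k)\<close>,
  the function \<open>(2/n) v\<^sup>n\<close> is a primitive of \<open>\<Sum>\<^sub>i v\<^sup>n / (u - u\<^sub>i)\<close> along the cycle, so the
  periods sum to zero. Moving \<open>u\<^sub>j\<close> from \<open>c\<close> to \<open>w\<close> multiplies the lift by the continuous root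
  \<open>((z - w) / (z - c))\<^sup>1\<^sup>/\<^sup>2\<close> (two continuous square roots of the same nonvanishing function on a
  connected set agree once they agree at one point). Differentiating under the integral at
  \<open>w = c\<close> produces the kernel \<open>-(n/2) / ((z - u\<^sub>j) (z - u\<^sub>i))\<close>, and partial fractions turn it into
  \<open>n/2 (a\<^sub>i - a\<^sub>j) / (u\<^sub>j - u\<^sub>i)\<close>.
\<close>

lemma continuous_square_roots_eq:
  fixes a b :: "'a::topological_space \<Rightarrow> complex"
  assumes X: "connected X" and ca: "continuous_on X a" and cb: "continuous_on X b"
    and sq: "\<And>x. x \<in> X \<Longrightarrow> (a x)\<^sup>2 = (b x)\<^sup>2" and nz: "\<And>x. x \<in> X \<Longrightarrow> b x \<noteq> 0"
    and x0: "x0 \<in> X" "a x0 = b x0" and x: "x \<in> X"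
  shows "a x = b x"
proof -
  define c where "c x = a x / b x" for x
  have cc: "continuous_on X c"
    unfolding c_def using ca cb nz by (intro continuous_on_divide) auto
  have c_sign: "c x = 1 \<or> c x = -1" if "x \<in> X" for x
  proof -
    have "(c x)\<^sup>2 = 1" using sq[OF that] nz[OF that] by (simp add: c_def power_divide)
    then show ?thesis using power2_eq_1_iff by blast
  qed
  have "c constant_on X"
  proof (rule continuous_discrete_range_constant[OF X cc])
    fix x assume "x \<in> X"
    show "\<exists>e>0. \<forall>y. y \<in> X \<and> c y \<noteq> c x \<longrightarrow> e \<le> norm (c y - c x)"
    proof (intro exI[of _ 1] conjI allI impI)
      fix y assume "y \<in> X \<and> c y \<noteq> c x"
      then show "1 \<le> norm (c y - c x)" using c_sign[of x] c_sign[of y] \<open>x \<in> X\<close> by auto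
    qed simp
  qed
  then have "c x = c x0" using x x0(1) by (auto simp: constant_on_def)
  also have "c x0 = 1" using x0 nz[OF x0(1)] by (simp add: c_def)
  finally show ?thesis using nz[OF x] by (simp add: c_def field_simps)
qed

lemma Re_pos_if_norm_one_minus_less:
  fixes z :: complex
  assumes "norm (1 - z) < 1"
  shows "0 < Re z" "z \<notin> \<real>\<^sub>\<le>\<^sub>0"
proof -
  show "0 < Re z" using abs_Re_le_cmod[of "1 - z"] assms by auto
  then show "z \<notin> \<real>\<^sub>\<le>\<^sub>0" by (simp add: complex_nonpos_Reals_iff)
qed

lemma holomorphic_sqrt_near:
  fixes P :: "complex \<Rightarrow> complex"
  assumes hP: "P holomorphic_on A" and A: "open A" "z0 \<in> A"
    and P0: "P z0 \<noteq> 0" and s0: "s0\<^sup>2 = P z0"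
  obtains r where "r > 0" "ball z0 r \<subseteq> A"
    "(\<lambda>z. s0 * csqrt (P z / P z0)) holomorphic_on ball z0 r"
    "\<And>z. z \<in> ball z0 r \<Longrightarrow> (s0 * csqrt (P z / P z0))\<^sup>2 = P z \<and> s0 * csqrt (P z / P z0) \<noteq> 0"
proof -
  obtain r1 where r1: "r1 > 0" "ball z0 r1 \<subseteq> A" using A open_contains_ball by blast
  have "continuous (at z0) P"
    using hP A holomorphic_on_imp_continuous_on continuous_on_eq_continuous_at by blast
  then obtain r2 where r2: "r2 > 0" "\<And>z. dist z z0 < r2 \<Longrightarrow> dist (P z) (P z0) < norm (P z0)"
    unfolding continuous_at_eps_delta using P0 by (metis zero_less_norm_iff)
  define r where "r = min r1 r2"
  have near: "norm (1 - P z / P z0) < 1" if "z \<in> ball z0 r" for z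
  proof -
    have "dist (P z) (P z0) < norm (P z0)" using r2(2)[of z] that by (auto simp: r_def dist_commute)
    moreover have "1 - P z / P z0 = (P z0 - P z) / P z0" using P0 by (simp add: field_simps)
    ultimately show ?thesis using P0 by (simp add: norm_divide dist_norm norm_minus_commute)
  qed
  note Re_pos = Re_pos_if_norm_one_minus_less[OF near]
  show ?thesis
  proof
    show "r > 0" "ball z0 r \<subseteq> A" using r1 r2 by (auto simp: r_def)
    then have "(\<lambda>z. P z / P z0) holomorphic_on ball z0 r"
      using hP by (intro holomorphic_intros) (auto intro: holomorphic_on_subset)
    then have "(csqrt \<circ> (\<lambda>z. P z / P z0)) holomorphic_on ball z0 r"
      by (rule holomorphic_on_compose_gen[OF _ holomorphic_on_csqrt]) (use Re_pos in auto)
    then show "(\<lambda>z. s0 * csqrt (P z / P z0)) holomorphic_on ball z0 r"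
      by (intro holomorphic_on_mult[OF holomorphic_on_const]) (simp add: o_def)
    fix z assume z: "z \<in> ball z0 r"
    have "(s0 * csqrt (P z / P z0))\<^sup>2 = P z" using s0 P0 by (simp add: power_mult_distrib)
    then show "(s0 * csqrt (P z / P z0))\<^sup>2 = P z \<and> s0 * csqrt (P z / P z0) \<noteq> 0"
      using Re_pos(1)[OF z] s0 P0 by auto
  qed
qed

lemma continuous_sqrt_lift_locally_holomorphic:
  fixes \<gamma> W :: "real \<Rightarrow> complex" and P :: "complex \<Rightarrow> complex"
  assumes c\<gamma>: "continuous_on {0..1} \<gamma>" and cW: "continuous_on {0..1} W"
    and sqW: "\<And>t. t \<in> {0..1} \<Longrightarrow> (W t)\<^sup>2 = P (\<gamma> t)"
    and hP: "P holomorphic_on \<Omega>" and \<Omega>: "open \<Omega>" and nzP: "\<And>z. z \<in> \<Omega> \<Longrightarrow> P z \<noteq> 0"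
    and path: "\<And>t. t \<in> {0..1} \<Longrightarrow> \<gamma> t \<in> \<Omega>" and t0: "t0 \<in> {0..1}"
  obtains r \<psi> \<delta> where "r > 0" "\<psi> holomorphic_on ball (\<gamma> t0) r" "ball (\<gamma> t0) r \<subseteq> \<Omega>"
    "\<And>z. z \<in> ball (\<gamma> t0) r \<Longrightarrow> (\<psi> z)\<^sup>2 = P z \<and> \<psi> z \<noteq> 0" "\<delta> > 0"
    "\<And>t. t \<in> {0..1} \<Longrightarrow> dist t t0 < \<delta> \<Longrightarrow> \<gamma> t \<in> ball (\<gamma> t0) r \<and> W t = \<psi> (\<gamma> t)"
proof -
  let ?z0 = "\<gamma> t0"
  have P0: "P ?z0 \<noteq> 0" using nzP path t0 by blast
  define \<psi> where "\<psi> z = W t0 * csqrt (P z / P ?z0)" for z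
  obtain r where r: "r > 0" "ball ?z0 r \<subseteq> \<Omega>" "\<psi> holomorphic_on ball ?z0 r"
    "\<And>z. z \<in> ball ?z0 r \<Longrightarrow> (\<psi> z)\<^sup>2 = P z \<and> \<psi> z \<noteq> 0"
    using holomorphic_sqrt_near[OF hP \<Omega> path[OF t0] P0 sqW[OF t0]] unfolding \<psi>_def by blast
  obtain \<delta> where \<delta>: "\<delta> > 0" "\<And>t. t \<in> {0..1} \<Longrightarrow> dist t t0 < \<delta> \<Longrightarrow> dist (\<gamma> t) ?z0 < r"
    using c\<gamma> t0 r(1) unfolding continuous_on_iff by metis
  define X where "X = {0..1} \<inter> ball t0 \<delta>"
  have inX: "t \<in> {0..1}" "\<gamma> t \<in> ball ?z0 r" if "t \<in> X" for t
    using that \<delta>(2)[of t] by (auto simp: X_def dist_commute)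
  have "W t = \<psi> (\<gamma> t)" if "t \<in> X" for t
  proof (rule continuous_square_roots_eq[of X _ _ t0])
    show "connected X" unfolding X_def
      by (intro convex_connected convex_Int convex_ball) (simp add: convex_real_interval)
    show "continuous_on X W" using cW by (rule continuous_on_subset) (auto simp: X_def)
    have "continuous_on (ball ?z0 r) \<psi>" using r(3) holomorphic_on_imp_continuous_on by blast
    then show "continuous_on X (\<lambda>t. \<psi> (\<gamma> t))"
      by (rule continuous_on_compose2[OF _ continuous_on_subset[OF c\<gamma>]]) (auto dest: inX)
    show "t0 \<in> X" using t0 \<delta> by (auto simp: X_def)
    show "W t0 = \<psi> (\<gamma> t0)" using P0 by (simp add: \<psi>_def)
  qed (use that inX sqW r(4) in auto)
  then show ?thesis
    using that[OF r(1,3,2,4) \<delta>(1)] inX by (auto simp: X_def dist_commute)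
qed

lemma valid_path_has_vector_derivative:
  assumes "valid_path \<gamma>"
  obtains S where "finite S"
    "\<And>t. t \<in> {0..1} - S \<Longrightarrow> (\<gamma> has_vector_derivative vector_derivative \<gamma> (at t)) (at t)"
  using assms unfolding valid_path_def piecewise_C1_differentiable_on_def C1_differentiable_on_eq
  by (metis vector_derivative_works)

text \<open>
  A valid path may have infinite length, so integrals along it are estimated through
  primitives on small discs rather than through its length.
\<close>

lemma holomorphic_segment_integral_bound:
  fixes \<gamma> :: "real \<Rightarrow> complex"
  assumes S: "finite S" and ab: "a \<le> b"
    and d\<gamma>: "\<And>t. t \<in> {a<..<b} - S \<Longrightarrow> (\<gamma> has_vector_derivative vector_derivative \<gamma> (at t)) (at t)"
    and c\<gamma>: "continuous_on {a..b} \<gamma>" and in_ball: "\<gamma> ` {a..b} \<subseteq> ball c r"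
    and h: "h holomorphic_on ball c r"
  obtains I where "((\<lambda>t. h (\<gamma> t) * vector_derivative \<gamma> (at t)) has_integral I) {a..b}"
    "\<And>B. (\<And>z. z \<in> ball c r \<Longrightarrow> norm (h z) \<le> B) \<Longrightarrow> norm I \<le> 2 * r * B"
proof -
  have in_ball': "\<gamma> t \<in> ball c r" if "t \<in> {a..b}" for t using in_ball that by blast
  obtain \<Phi> where \<Phi>: "\<And>z. z \<in> ball c r \<Longrightarrow> (\<Phi> has_field_derivative h z) (at z within ball c r)"
    using holomorphic_convex_primitive'[OF _ _ h] by auto
  have \<Phi>_at: "(\<Phi> has_field_derivative h z) (at z)" if "z \<in> ball c r" for z
    using \<Phi>[OF that] that at_within_open[of z "ball c r"] by simp
  have "continuous_on (ball c r) \<Phi>"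
    using \<Phi>_at by (meson DERIV_continuous continuous_at_imp_continuous_on)
  then have c\<Phi>\<gamma>: "continuous_on {a..b} (\<Phi> \<circ> \<gamma>)"
    using continuous_on_compose[OF c\<gamma> continuous_on_subset[OF _ in_ball]] by blast
  have "((\<lambda>t. vector_derivative \<gamma> (at t) * h (\<gamma> t)) has_integral ((\<Phi> \<circ> \<gamma>) b - (\<Phi> \<circ> \<gamma>) a)) {a..b}"
  proof (rule fundamental_theorem_of_calculus_interior_strong[OF S ab _ c\<Phi>\<gamma>])
    fix t assume t: "t \<in> {a<..<b} - S"
    then have "\<gamma> t \<in> ball c r" by (intro in_ball') auto
    then show "((\<Phi> \<circ> \<gamma>) has_vector_derivative vector_derivative \<gamma> (at t) * h (\<gamma> t)) (at t)"
      by (rule field_vector_diff_chain_at[OF d\<gamma>[OF t] \<Phi>_at])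
  qed
  then have I: "((\<lambda>t. h (\<gamma> t) * vector_derivative \<gamma> (at t)) has_integral (\<Phi> (\<gamma> b) - \<Phi> (\<gamma> a))) {a..b}"
    by (simp add: mult.commute)
  show ?thesis
  proof (rule that[OF I])
    fix B assume B: "\<And>z. z \<in> ball c r \<Longrightarrow> norm (h z) \<le> B"
    have ends: "\<gamma> a \<in> ball c r" "\<gamma> b \<in> ball c r" using in_ball'[of a] in_ball'[of b] ab by simp_all
    then have "0 \<le> B" using B norm_ge_zero order_trans by blast
    have "norm (\<Phi> (\<gamma> b) - \<Phi> (\<gamma> a)) \<le> B * norm (\<gamma> b - \<gamma> a)"
      using \<Phi> B ends by (intro field_differentiable_bound[of "ball c r"]) auto
    also have "\<dots> \<le> B * (2 * r)"
    proof (intro mult_left_mono \<open>0 \<le> B\<close>)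
      show "norm (\<gamma> b - \<gamma> a) \<le> 2 * r"
        using ends dist_triangle2[of "\<gamma> b" "\<gamma> a" c] by (simp add: dist_norm norm_minus_commute)
    qed
    finally show "norm (\<Phi> (\<gamma> b) - \<Phi> (\<gamma> a)) \<le> 2 * r * B" by (simp add: mult_ac)
  qed
qed

lemma weighted_segment_integral_bound:
  fixes \<gamma> K :: "real \<Rightarrow> complex"
  assumes S: "finite S" and ab: "a \<le> b"
    and d\<gamma>: "\<And>t. t \<in> {a<..<b} - S \<Longrightarrow> (\<gamma> has_vector_derivative vector_derivative \<gamma> (at t)) (at t)"
    and c\<gamma>: "continuous_on {a..b} \<gamma>"
    and disc: "ball c r \<subseteq> \<Omega>" "\<psi> holomorphic_on ball c r" "\<And>z. z \<in> ball c r \<Longrightarrow> norm (\<psi> z) \<le> M"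
    and on_disc: "\<And>t. t \<in> {a..b} \<Longrightarrow> \<gamma> t \<in> ball c r \<and> K t = \<psi> (\<gamma> t)"
    and f: "f holomorphic_on \<Omega>"
  obtains I where "((\<lambda>t. f (\<gamma> t) * K t * vector_derivative \<gamma> (at t)) has_integral I) {a..b}"
    "\<And>B. (\<And>z. z \<in> \<Omega> \<Longrightarrow> norm (f z) \<le> B) \<Longrightarrow> norm I \<le> 2 * r * M * B"
proof -
  have in_ball: "\<gamma> ` {a..b} \<subseteq> ball c r" using on_disc by blast
  have "(\<lambda>z. f z * \<psi> z) holomorphic_on ball c r"
    using f disc by (intro holomorphic_intros) (auto intro: holomorphic_on_subset)
  then obtain I where I: "((\<lambda>t. f (\<gamma> t) * \<psi> (\<gamma> t) * vector_derivative \<gamma> (at t)) has_integral I) {a..b}"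
    and bound: "\<And>B. (\<And>z. z \<in> ball c r \<Longrightarrow> norm (f z * \<psi> z) \<le> B) \<Longrightarrow> norm I \<le> 2 * r * B"
    using holomorphic_segment_integral_bound[OF S ab d\<gamma> c\<gamma> in_ball] by blast
  show ?thesis
  proof (rule that)
    show "((\<lambda>t. f (\<gamma> t) * K t * vector_derivative \<gamma> (at t)) has_integral I) {a..b}"
      using I by (rule has_integral_eq[rotated]) (simp add: on_disc)
    fix B assume B: "\<And>z. z \<in> \<Omega> \<Longrightarrow> norm (f z) \<le> B"
    have "norm (f z * \<psi> z) \<le> B * M" if "z \<in> ball c r" for z
    proof -
      have fz: "norm (f z) \<le> B" using B disc(1) that by blast
      then have "0 \<le> B" using norm_ge_zero order_trans by blast
      then show ?thesis unfolding norm_mult using fz disc(3)[OF that] by (intro mult_mono) auto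
    qed
    then show "norm I \<le> 2 * r * M * B" using bound by (fastforce simp: mult_ac)
  qed
qed

lemma uniform_partition_fine:
  assumes \<Delta>: "\<And>t. t \<in> {0..1::real} \<Longrightarrow> \<Delta> t > 0"
  obtains N :: nat where "N > 0"
    "\<And>k. k < N \<Longrightarrow> \<exists>t0\<in>{0..1}. {real k / N..real (Suc k) / N} \<subseteq> ball t0 (\<Delta> t0)"
proof -
  obtain e where e: "e > 0" "\<And>x. x \<in> {0..1} \<Longrightarrow> \<exists>G \<in> (\<lambda>t0. ball t0 (\<Delta> t0)) ` {0..1::real}. ball x e \<subseteq> G"
  proof (rule Heine_Borel_lemma[of "{0..1::real}" "(\<lambda>t0. ball t0 (\<Delta> t0)) ` {0..1}"])
    show "{0..1::real} \<subseteq> \<Union> ((\<lambda>t0. ball t0 (\<Delta> t0)) ` {0..1})" using \<Delta> by force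
  qed auto
  obtain m :: nat where m: "inverse (real (Suc m)) < e" using reals_Archimedean e(1) by blast
  define N where "N = Suc m"
  have N: "inverse (real N) < e" "N > 0" using m by (simp_all add: N_def)
  show ?thesis
  proof (rule that[OF N(2)])
    fix k assume k: "k < N"
    then have "real k / N \<in> {0..1}" by auto
    moreover have "{real k / N..real (Suc k) / N} \<subseteq> ball (real k / N) e"
    proof
      fix t assume "t \<in> {real k / N..real (Suc k) / N}"
      moreover have "real (Suc k) / N = real k / N + inverse N" by (simp add: add_divide_distrib divide_inverse algebra_simps)
      ultimately show "t \<in> ball (real k / N) e" using N(1) by (auto simp: dist_real_def)
    qed
    moreover obtain t0 where "t0 \<in> {0..1}" "ball (real k / N) e \<subseteq> ball t0 (\<Delta> t0)"
      using e(2)[OF calculation(1)] by blast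
    ultimately show "\<exists>t0\<in>{0..1}. {real k / N..real (Suc k) / N} \<subseteq> ball t0 (\<Delta> t0)"
      by blast
  qed
qed

lemma has_integral_uniform_partition:
  fixes g :: "real \<Rightarrow> 'a::banach"
  assumes N: "N > 0"
    and I: "\<And>k. k < N \<Longrightarrow> (g has_integral I k) {real k / N..real (Suc k) / N}"
  shows "(g has_integral (\<Sum>k<N. I k)) {0..1}"
proof -
  have "(g has_integral (\<Sum>k<m. I k)) {0..real m / N}" if "m \<le> N" for m
    using that
  proof (induction m)
    case (Suc m)
    have "0 \<le> real m / N" "real m / N \<le> real (Suc m) / N" by (auto simp: divide_simps)
    moreover have "(g has_integral (\<Sum>k<m. I k)) {0..real m / N}" using Suc by simp
    moreover have "(g has_integral I m) {real m / N..real (Suc m) / N}" using Suc I by simp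
    ultimately have "(g has_integral (\<Sum>k<m. I k) + I m) {0..real (Suc m) / N}"
      by (rule has_integral_combine)
    then show ?case by simp
  qed auto
  from this[of N] show ?thesis using N by simp
qed

text \<open>
  Branches of \<open>v\<^sup>n\<close> along the cycle are weights of this kind; they need not be functions
  on the image of \<open>\<gamma>\<close>, since the cycle may pass through the same point on both sheets.
\<close>

definition locally_holomorphic_along ::
  "complex set \<Rightarrow> (real \<Rightarrow> complex) \<Rightarrow> (real \<Rightarrow> complex) \<Rightarrow> bool" where
  "locally_holomorphic_along \<Omega> \<gamma> K \<longleftrightarrow>
     (\<forall>t0\<in>{0..1}. \<exists>c r \<psi> M \<delta>. ball c r \<subseteq> \<Omega> \<and> \<psi> holomorphic_on ball c r \<and>
        (\<forall>z\<in>ball c r. norm (\<psi> z) \<le> M) \<and> \<delta> > 0 \<and>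
        (\<forall>t\<in>{0..1}. dist t t0 < \<delta> \<longrightarrow> \<gamma> t \<in> ball c r \<and> K t = \<psi> (\<gamma> t)))"

lemma locally_holomorphic_along_uniform_cover:
  assumes K: "locally_holomorphic_along \<Omega> \<gamma> K"
  obtains N :: nat and c :: "nat \<Rightarrow> complex" and r :: "nat \<Rightarrow> real" and \<psi> and M :: "nat \<Rightarrow> real"
  where "N > 0"
    "\<And>k. k < N \<Longrightarrow> ball (c k) (r k) \<subseteq> \<Omega> \<and> \<psi> k holomorphic_on ball (c k) (r k) \<and>
       (\<forall>z\<in>ball (c k) (r k). norm (\<psi> k z) \<le> M k) \<and>
       (\<forall>t\<in>{real k / N..real (Suc k) / N}. \<gamma> t \<in> ball (c k) (r k) \<and> K t = \<psi> k (\<gamma> t))"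
proof -
  obtain C R \<Psi> M \<Delta> where H: "\<And>t0. t0 \<in> {0..1} \<Longrightarrow>
      ball (C t0) (R t0) \<subseteq> \<Omega> \<and> \<Psi> t0 holomorphic_on ball (C t0) (R t0) \<and>
      (\<forall>z\<in>ball (C t0) (R t0). norm (\<Psi> t0 z) \<le> M t0) \<and> \<Delta> t0 > 0 \<and>
      (\<forall>t\<in>{0..1}. dist t t0 < \<Delta> t0 \<longrightarrow> \<gamma> t \<in> ball (C t0) (R t0) \<and> K t = \<Psi> t0 (\<gamma> t))"
    using K unfolding locally_holomorphic_along_def by metis
  obtain N where N: "N > 0"
    "\<And>k. k < N \<Longrightarrow> \<exists>t0\<in>{0..1}. {real k / N..real (Suc k) / N} \<subseteq> ball t0 (\<Delta> t0)"
    using uniform_partition_fine[of \<Delta>] H by blast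
  then obtain T where T: "\<And>k. k < N \<Longrightarrow> T k \<in> {0..1}"
    "\<And>k. k < N \<Longrightarrow> {real k / N..real (Suc k) / N} \<subseteq> ball (T k) (\<Delta> (T k))"
    by metis
  show ?thesis
  proof (rule that[OF N(1), of "\<lambda>k. C (T k)" "\<lambda>k. R (T k)" "\<lambda>k. \<Psi> (T k)" "\<lambda>k. M (T k)"])
    fix k assume k: "k < N"
    have "{real k / N..real (Suc k) / N} \<subseteq> {0..1}" using k by (auto simp: divide_simps)
    moreover have "dist t (T k) < \<Delta> (T k)" if "t \<in> {real k / N..real (Suc k) / N}" for t
      using T(2)[OF k] that by (auto simp: dist_commute)
    ultimately show "ball (C (T k)) (R (T k)) \<subseteq> \<Omega> \<and> \<Psi> (T k) holomorphic_on ball (C (T k)) (R (T k)) \<and>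
       (\<forall>z\<in>ball (C (T k)) (R (T k)). norm (\<Psi> (T k) z) \<le> M (T k)) \<and>
       (\<forall>t\<in>{real k / N..real (Suc k) / N}. \<gamma> t \<in> ball (C (T k)) (R (T k)) \<and> K t = \<Psi> (T k) (\<gamma> t))"
      using H[OF T(1)[OF k]] by blast
  qed
qed

lemma integral_bound_from_uniform_cover:
  fixes \<gamma> K :: "real \<Rightarrow> complex" and c :: "nat \<Rightarrow> complex" and r M :: "nat \<Rightarrow> real"
  assumes vp: "valid_path \<gamma>" and N: "N > 0"
    and cover: "\<And>k. k < N \<Longrightarrow> ball (c k) (r k) \<subseteq> \<Omega> \<and> \<psi> k holomorphic_on ball (c k) (r k) \<and>
       (\<forall>z\<in>ball (c k) (r k). norm (\<psi> k z) \<le> M k) \<and>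
       (\<forall>t\<in>{real k / N..real (Suc k) / N}. \<gamma> t \<in> ball (c k) (r k) \<and> K t = \<psi> k (\<gamma> t))"
    and f: "f holomorphic_on \<Omega>"
  obtains I where "((\<lambda>t. f (\<gamma> t) * K t * vector_derivative \<gamma> (at t)) has_integral I) {0..1}"
    "\<And>B. (\<And>z. z \<in> \<Omega> \<Longrightarrow> norm (f z) \<le> B) \<Longrightarrow> norm I \<le> (\<Sum>k<N. 2 * r k * M k) * B"
proof -
  obtain S where S: "finite S"
    and d\<gamma>: "\<And>t. t \<in> {0..1} - S \<Longrightarrow> (\<gamma> has_vector_derivative vector_derivative \<gamma> (at t)) (at t)"
    using valid_path_has_vector_derivative[OF vp] by blast
  have c\<gamma>: "continuous_on {0..1} \<gamma>" using vp valid_path_imp_path path_def by blast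
  have "\<forall>k\<in>{..<N}. \<exists>I.
      ((\<lambda>t. f (\<gamma> t) * K t * vector_derivative \<gamma> (at t)) has_integral I) {real k / N..real (Suc k) / N} \<and>
      (\<forall>B. (\<forall>z\<in>\<Omega>. norm (f z) \<le> B) \<longrightarrow> norm I \<le> 2 * r k * M k * B)"
  proof (rule ballI)
    fix k assume "k \<in> {..<N}"
    then have k: "k < N" by simp
    let ?a = "real k / N" and ?b = "real (Suc k) / N"
    have ab: "?a \<le> ?b" by (simp add: divide_right_mono)
    have piece: "{?a..?b} \<subseteq> {0..1}" using k by (auto simp: divide_simps)
    have d\<gamma>': "(\<gamma> has_vector_derivative vector_derivative \<gamma> (at t)) (at t)" if "t \<in> {?a<..<?b} - S" for t
    proof -
      have "t \<in> {?a..?b}" using that by auto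
      then have "t \<in> {0..1}" using piece by (rule subsetD[rotated])
      then show ?thesis using d\<gamma> that by simp
    qed
    obtain I where I: "((\<lambda>t. f (\<gamma> t) * K t * vector_derivative \<gamma> (at t)) has_integral I) {?a..?b}"
      and bound: "\<And>B. (\<And>z. z \<in> \<Omega> \<Longrightarrow> norm (f z) \<le> B) \<Longrightarrow> norm I \<le> 2 * r k * M k * B"
      using weighted_segment_integral_bound[OF S ab d\<gamma>' continuous_on_subset[OF c\<gamma> piece] _ _ _ _ f]
        cover[OF k] by blast
    show "\<exists>I. ((\<lambda>t. f (\<gamma> t) * K t * vector_derivative \<gamma> (at t)) has_integral I) {?a..?b} \<and>
        (\<forall>B. (\<forall>z\<in>\<Omega>. norm (f z) \<le> B) \<longrightarrow> norm I \<le> 2 * r k * M k * B)"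
      using I bound by blast
  qed
  from bchoice[OF this] obtain I where I: "\<forall>k\<in>{..<N}.
      ((\<lambda>t. f (\<gamma> t) * K t * vector_derivative \<gamma> (at t)) has_integral I k) {real k / N..real (Suc k) / N} \<and>
      (\<forall>B. (\<forall>z\<in>\<Omega>. norm (f z) \<le> B) \<longrightarrow> norm (I k) \<le> 2 * r k * M k * B)"
    ..
  show ?thesis
  proof (rule that)
    show "((\<lambda>t. f (\<gamma> t) * K t * vector_derivative \<gamma> (at t)) has_integral (\<Sum>k<N. I k)) {0..1}"
      using I by (intro has_integral_uniform_partition N) simp
    fix B assume "\<And>z. z \<in> \<Omega> \<Longrightarrow> norm (f z) \<le> B"
    then have "norm (\<Sum>k<N. I k) \<le> (\<Sum>k<N. 2 * r k * M k * B)"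
      using I by (intro order_trans[OF norm_sum sum_mono]) simp
    then show "norm (\<Sum>k<N. I k) \<le> (\<Sum>k<N. 2 * r k * M k) * B" by (simp add: sum_distrib_right)
  qed
qed

lemma locally_holomorphic_along_integral_bound:
  fixes \<gamma> K :: "real \<Rightarrow> complex"
  assumes vp: "valid_path \<gamma>" and K: "locally_holomorphic_along \<Omega> \<gamma> K"
  obtains L where
    "\<And>f. f holomorphic_on \<Omega> \<Longrightarrow>
       (\<lambda>t. f (\<gamma> t) * K t * vector_derivative \<gamma> (at t)) integrable_on {0..1}"
    "\<And>f B. f holomorphic_on \<Omega> \<Longrightarrow> (\<And>z. z \<in> \<Omega> \<Longrightarrow> norm (f z) \<le> B) \<Longrightarrow>
       norm (integral {0..1} (\<lambda>t. f (\<gamma> t) * K t * vector_derivative \<gamma> (at t))) \<le> L * B"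
proof -
  obtain N c r \<psi> M where N: "N > 0"
    and cover: "\<And>k. k < N \<Longrightarrow> ball (c k) (r k) \<subseteq> \<Omega> \<and> \<psi> k holomorphic_on ball (c k) (r k) \<and>
       (\<forall>z\<in>ball (c k) (r k). norm (\<psi> k z) \<le> M k) \<and>
       (\<forall>t\<in>{real k / N..real (Suc k) / N}. \<gamma> t \<in> ball (c k) (r k) \<and> K t = \<psi> k (\<gamma> t))"
    by (rule locally_holomorphic_along_uniform_cover[OF K]) (rule that)
  show ?thesis
  proof (rule that)
    fix f assume f: "f holomorphic_on \<Omega>"
    obtain I where "((\<lambda>t. f (\<gamma> t) * K t * vector_derivative \<gamma> (at t)) has_integral I) {0..1}"
      using integral_bound_from_uniform_cover[OF vp N cover f] by blast
    then show "(\<lambda>t. f (\<gamma> t) * K t * vector_derivative \<gamma> (at t)) integrable_on {0..1}"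
      by (rule has_integral_integrable)
  next
    fix f B assume f: "f holomorphic_on \<Omega>" and B: "\<And>z. z \<in> \<Omega> \<Longrightarrow> norm (f z) \<le> B"
    obtain I where "((\<lambda>t. f (\<gamma> t) * K t * vector_derivative \<gamma> (at t)) has_integral I) {0..1}"
      "norm I \<le> (\<Sum>k<N. 2 * r k * M k) * B"
      using integral_bound_from_uniform_cover[OF vp N cover f] B by blast
    then show "norm (integral {0..1} (\<lambda>t. f (\<gamma> t) * K t * vector_derivative \<gamma> (at t)))
        \<le> (\<Sum>k<N. 2 * r k * M k) * B"
      by (simp add: integral_unique)
  qed
qed

lemma has_field_derivative_weighted_integral:
  fixes \<gamma> K :: "real \<Rightarrow> complex" and D :: "complex \<Rightarrow> complex"
    and h :: "complex \<Rightarrow> complex \<Rightarrow> complex"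
  assumes vp: "valid_path \<gamma>" and K: "locally_holomorphic_along \<Omega> \<gamma> K"
    and h: "\<And>w. w \<in> ball c \<rho> \<Longrightarrow> h w holomorphic_on \<Omega>" and D: "D holomorphic_on \<Omega>" and \<rho>: "\<rho> > 0"
    and approx: "\<And>\<epsilon>. \<epsilon> > 0 \<Longrightarrow> \<exists>\<delta>>0. \<forall>w z. norm (w - c) < \<delta> \<longrightarrow> z \<in> \<Omega> \<longrightarrow>
                   norm (h w z - h c z - (w - c) * D z) \<le> \<epsilon> * norm (w - c)"
  shows "((\<lambda>w. integral {0..1} (\<lambda>t. h w (\<gamma> t) * K t * vector_derivative \<gamma> (at t))) has_field_derivative
           integral {0..1} (\<lambda>t. D (\<gamma> t) * K t * vector_derivative \<gamma> (at t))) (at c)"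
proof -
  define J where "J f = integral {0..1} (\<lambda>t. f (\<gamma> t) * K t * vector_derivative \<gamma> (at t))" for f
  obtain L where int: "\<And>f. f holomorphic_on \<Omega> \<Longrightarrow>
      (\<lambda>t. f (\<gamma> t) * K t * vector_derivative \<gamma> (at t)) integrable_on {0..1}"
    and bound: "\<And>f B. f holomorphic_on \<Omega> \<Longrightarrow> (\<And>z. z \<in> \<Omega> \<Longrightarrow> norm (f z) \<le> B) \<Longrightarrow> norm (J f) \<le> L * B"
    unfolding J_def by (rule locally_holomorphic_along_integral_bound[OF vp K]) blast
  have c: "c \<in> ball c \<rho>" using \<rho> by simp
  have J_diff: "J (h w) - J (h c) - J D * (w - c) = J (\<lambda>z. h w z - h c z - (w - c) * D z)"
    if "w \<in> ball c \<rho>" for w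
  proof -
    have integral: "((\<lambda>t. f (\<gamma> t) * K t * vector_derivative \<gamma> (at t)) has_integral J f) {0..1}"
      if "f holomorphic_on \<Omega>" for f
      unfolding J_def using int[OF that] by (rule integrable_integral)
    have "((\<lambda>t. (h w (\<gamma> t) - h c (\<gamma> t) - (w - c) * D (\<gamma> t)) * K t * vector_derivative \<gamma> (at t))
        has_integral (J (h w) - J (h c) - (w - c) * J D)) {0..1}"
      using has_integral_diff[OF has_integral_diff[OF integral integral] has_integral_mult_right[OF integral],
          OF h[OF that] h[OF c] D, of "w - c"]
      by (rule has_integral_eq[rotated]) (simp add: algebra_simps)
    then have "J (\<lambda>z. h w z - h c z - (w - c) * D z) = J (h w) - J (h c) - (w - c) * J D"
      unfolding J_def[of "\<lambda>z. h w z - h c z - (w - c) * D z"] by (rule integral_unique)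
    then show ?thesis by (simp add: mult.commute)
  qed
  show ?thesis
    unfolding J_def[symmetric] has_field_derivative_def has_derivative_at_alt
  proof (intro conjI allI impI bounded_linear_mult_right)
    fix \<epsilon> :: real assume \<epsilon>: "\<epsilon> > 0"
    define \<epsilon>' where "\<epsilon>' = \<epsilon> / (\<bar>L\<bar> + 1)"
    have \<epsilon>': "\<epsilon>' > 0" "\<bar>L\<bar> * \<epsilon>' \<le> \<epsilon>" using \<epsilon> by (auto simp: \<epsilon>'_def field_simps)
    obtain \<delta> where \<delta>: "\<delta> > 0" "\<And>w z. norm (w - c) < \<delta> \<Longrightarrow> z \<in> \<Omega> \<Longrightarrow>
        norm (h w z - h c z - (w - c) * D z) \<le> \<epsilon>' * norm (w - c)"
      using approx[OF \<epsilon>'(1)] by blast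
    show "\<exists>d>0. \<forall>w. norm (w - c) < d \<longrightarrow> norm (J (h w) - J (h c) - J D * (w - c)) \<le> \<epsilon> * norm (w - c)"
    proof (intro exI[of _ "min \<delta> \<rho>"] conjI allI impI)
      show "min \<delta> \<rho> > 0" using \<delta> \<rho> by simp
      fix w assume w: "norm (w - c) < min \<delta> \<rho>"
      then have wb: "w \<in> ball c \<rho>" by (simp add: dist_norm norm_minus_commute)
      have "(\<lambda>z. h w z - h c z - (w - c) * D z) holomorphic_on \<Omega>"
        using h[OF wb] h[OF c] D by (intro holomorphic_intros)
      then have "norm (J (h w) - J (h c) - J D * (w - c)) \<le> L * (\<epsilon>' * norm (w - c))"
        unfolding J_diff[OF wb] by (rule bound) (use w \<delta>(2) in simp)
      also have "\<dots> \<le> (\<bar>L\<bar> * \<epsilon>') * norm (w - c)" using \<epsilon>'(1) by (simp add: mult_right_mono)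
      also have "\<dots> \<le> \<epsilon> * norm (w - c)" using \<epsilon>'(2) by (simp add: mult_right_mono)
      finally show "norm (J (h w) - J (h c) - J D * (w - c)) \<le> \<epsilon> * norm (w - c)" .
    qed
  qed
qed

lemma sqrt_lift_powi_locally_holomorphic_along:
  fixes \<gamma> W :: "real \<Rightarrow> complex" and P :: "complex \<Rightarrow> complex"
  assumes c\<gamma>: "continuous_on {0..1} \<gamma>" and cW: "continuous_on {0..1} W"
    and sqW: "\<And>t. t \<in> {0..1} \<Longrightarrow> (W t)\<^sup>2 = P (\<gamma> t)"
    and hP: "P holomorphic_on \<Omega>" and \<Omega>: "open \<Omega>" and nzP: "\<And>z. z \<in> \<Omega> \<Longrightarrow> P z \<noteq> 0"
    and path: "\<And>t. t \<in> {0..1} \<Longrightarrow> \<gamma> t \<in> \<Omega>"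
  shows "locally_holomorphic_along \<Omega> \<gamma> (\<lambda>t. W t powi n)"
  unfolding locally_holomorphic_along_def
proof
  fix t0 :: real assume t0: "t0 \<in> {0..1}"
  obtain r \<psi> \<delta> where r: "r > 0" "\<psi> holomorphic_on ball (\<gamma> t0) r" "ball (\<gamma> t0) r \<subseteq> \<Omega>"
    "\<And>z. z \<in> ball (\<gamma> t0) r \<Longrightarrow> (\<psi> z)\<^sup>2 = P z \<and> \<psi> z \<noteq> 0" "\<delta> > 0"
    "\<And>t. t \<in> {0..1} \<Longrightarrow> dist t t0 < \<delta> \<Longrightarrow> \<gamma> t \<in> ball (\<gamma> t0) r \<and> W t = \<psi> (\<gamma> t)"
    using continuous_sqrt_lift_locally_holomorphic[OF c\<gamma> cW sqW hP \<Omega> nzP path t0] by metis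
  let ?c = "\<gamma> t0" and ?\<phi> = "\<lambda>z. \<psi> z powi n"
  have hol: "?\<phi> holomorphic_on ball ?c r"
    using r(2,4) by (intro holomorphic_on_power_int) auto
  have "cball ?c (r/2) \<subseteq> ball ?c r" using r(1) by (auto simp: subset_iff)
  then have "compact (?\<phi> ` cball ?c (r/2))"
    using hol by (intro compact_continuous_image holomorphic_on_imp_continuous_on)
      (auto intro: holomorphic_on_subset)
  then obtain M where M: "\<forall>z\<in>cball ?c (r/2). norm (?\<phi> z) \<le> M"
    using compact_imp_bounded bounded_iff by (metis image_eqI)
  obtain \<delta>' where \<delta>': "\<delta>' > 0" "\<And>t. t \<in> {0..1} \<Longrightarrow> dist t t0 < \<delta>' \<Longrightarrow> dist (\<gamma> t) ?c < r/2"
    using c\<gamma> t0 r(1) unfolding continuous_on_iff by (metis half_gt_zero)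
  show "\<exists>c r \<psi> M \<delta>. ball c r \<subseteq> \<Omega> \<and> \<psi> holomorphic_on ball c r \<and> (\<forall>z\<in>ball c r. norm (\<psi> z) \<le> M) \<and>
      \<delta> > 0 \<and> (\<forall>t\<in>{0..1}. dist t t0 < \<delta> \<longrightarrow> \<gamma> t \<in> ball c r \<and> W t powi n = \<psi> (\<gamma> t))"
  proof (intro exI conjI ballI impI)
    show "ball ?c (r/2) \<subseteq> \<Omega>" "?\<phi> holomorphic_on ball ?c (r/2)" "min \<delta> \<delta>' > 0"
      using r hol \<delta>' by (auto intro: holomorphic_on_subset)
    show "norm (?\<phi> z) \<le> M" if "z \<in> ball ?c (r/2)" for z using M that by auto
    fix t assume t: "t \<in> {0..1}" "dist t t0 < min \<delta> \<delta>'"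
    then show "\<gamma> t \<in> ball ?c (r/2)" using \<delta>'(2)[of t] by (simp add: dist_commute)
    show "W t powi n = ?\<phi> (\<gamma> t)" using r(6) t by simp
  qed
qed

lemma branch_poly_nonzero: "(\<And>k. z \<noteq> u $ k) \<Longrightarrow> branch_poly u z \<noteq> 0"
  by (simp add: branch_poly_def)

lemma holomorphic_on_branch_poly [holomorphic_intros]: "branch_poly u holomorphic_on A"
  unfolding branch_poly_def[abs_def] by (intro holomorphic_intros)

lemma open_branch_point_complement: "open (- range (($) (u :: complex ^ 'n)))"
  by (intro open_Compl finite_imp_closed) auto

lemma has_field_derivative_branch_poly:
  assumes "\<And>k. z \<noteq> u $ k"
  shows "(branch_poly u has_field_derivative branch_poly u z * (\<Sum>k\<in>UNIV. 1 / (z - u $ k))) (at z)"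
  unfolding branch_poly_def[abs_def]
  by (rule has_field_derivative_prod'[of UNIV "\<lambda>k z. z - u $ k" z "\<lambda>_. 1", simplified])
     (use assms in \<open>auto intro!: derivative_eq_intros\<close>)

lemma sqrt_lift_has_vector_derivative:
  fixes \<gamma> W :: "real \<Rightarrow> complex" and u :: "complex ^ 'n"
  assumes c\<gamma>: "continuous_on {0..1} \<gamma>" and cW: "continuous_on {0..1} W"
    and sqW: "\<And>t. t \<in> {0..1} \<Longrightarrow> (W t)\<^sup>2 = branch_poly u (\<gamma> t)"
    and avoids: "\<And>t k. t \<in> {0..1} \<Longrightarrow> \<gamma> t \<noteq> u $ k"
    and t: "t \<in> {0<..<1}" and d\<gamma>: "(\<gamma> has_vector_derivative \<gamma>') (at t)"
  shows "(W has_vector_derivative \<gamma>' * (W t * (\<Sum>k\<in>UNIV. 1 / (\<gamma> t - u $ k)) / 2)) (at t)"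
proof -
  define \<Sigma> where "\<Sigma> = (\<Sum>k\<in>UNIV. 1 / (\<gamma> t - u $ k))"
  have t01: "t \<in> {0..1}" using t by auto
  have path: "\<gamma> s \<in> - range (($) u)" if "s \<in> {0..1}" for s using avoids[OF that] by auto
  have nz: "branch_poly u z \<noteq> 0" if "z \<in> - range (($) u)" for z
    using that by (intro branch_poly_nonzero) auto
  obtain r \<psi> \<delta> where r: "r > 0" "\<psi> holomorphic_on ball (\<gamma> t) r"
    "\<And>z. z \<in> ball (\<gamma> t) r \<Longrightarrow> (\<psi> z)\<^sup>2 = branch_poly u z \<and> \<psi> z \<noteq> 0" "\<delta> > 0"
    "\<And>s. s \<in> {0..1} \<Longrightarrow> dist s t < \<delta> \<Longrightarrow> \<gamma> s \<in> ball (\<gamma> t) r \<and> W s = \<psi> (\<gamma> s)"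
    using continuous_sqrt_lift_locally_holomorphic[OF c\<gamma> cW sqW holomorphic_on_branch_poly
        open_branch_point_complement nz path t01] by metis
  have centre: "\<gamma> t \<in> ball (\<gamma> t) r" using r(1) by simp
  have Wt: "W t = \<psi> (\<gamma> t)" "W t \<noteq> 0" using r(3,5) centre t01 \<open>\<delta> > 0\<close> by auto
  obtain d where d: "(\<psi> has_field_derivative d) (at (\<gamma> t))"
    using holomorphic_on_imp_differentiable_at[OF r(2) open_ball centre] field_differentiable_def by blast
  have "((\<lambda>z. (\<psi> z)\<^sup>2) has_field_derivative 2 * d * \<psi> (\<gamma> t)) (at (\<gamma> t))"
    using DERIV_power[OF d, of 2] by (simp add: mult_ac)
  then have "(branch_poly u has_field_derivative 2 * d * \<psi> (\<gamma> t)) (at (\<gamma> t))"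
    by (rule has_field_derivative_transform_within_open[OF _ open_ball centre]) (use r(3) in auto)
  then have "2 * d * W t = (W t)\<^sup>2 * \<Sigma>"
    using DERIV_unique[OF has_field_derivative_branch_poly] avoids[OF t01] sqW[OF t01] Wt(1)
    by (metis \<Sigma>_def)
  then have d_eq: "d = W t * \<Sigma> / 2" using Wt(2) by (simp add: power2_eq_square field_simps)
  have "((\<psi> \<circ> \<gamma>) has_vector_derivative \<gamma>' * d) (at t)"
    by (rule field_vector_diff_chain_at[OF d\<gamma> d])
  then show ?thesis unfolding d_eq \<Sigma>_def
  proof (rule has_vector_derivative_transform_within_open[of _ _ _ "ball t \<delta> \<inter> {0<..<1}"])
    show "open (ball t \<delta> \<inter> {0<..<1})" "t \<in> ball t \<delta> \<inter> {0<..<1}" using t r(4) by auto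
  qed (use r(5) in \<open>auto simp: dist_commute\<close>)
qed

lemma period_integrand_integrable:
  fixes \<gamma> :: "real \<Rightarrow> complex" and V :: "complex ^ 'n \<Rightarrow> real \<Rightarrow> complex"
  assumes vp: "valid_path \<gamma>" and cV: "continuous_on {0..1} (V u)"
    and sqV: "\<And>t. t \<in> {0..1} \<Longrightarrow> (V u t)\<^sup>2 = branch_poly u (\<gamma> t)"
    and avoids: "\<And>t k. t \<in> {0..1} \<Longrightarrow> \<gamma> t \<noteq> u $ k"
  shows "(\<lambda>t. V u t powi n * vector_derivative \<gamma> (at t) / (\<gamma> t - u $ i)) integrable_on {0..1}"
proof -
  have c\<gamma>: "continuous_on {0..1} \<gamma>" using vp valid_path_imp_path path_def by blast
  have "locally_holomorphic_along (- range (($) u)) \<gamma> (\<lambda>t. V u t powi n)"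
  proof (rule sqrt_lift_powi_locally_holomorphic_along[OF c\<gamma> cV sqV holomorphic_on_branch_poly
        open_branch_point_complement])
    show "branch_poly u z \<noteq> 0" if "z \<in> - range (($) u)" for z
      using that by (intro branch_poly_nonzero) auto
  qed (use avoids in auto)
  then obtain L where L: "\<And>f. f holomorphic_on - range (($) u) \<Longrightarrow>
      (\<lambda>t. f (\<gamma> t) * V u t powi n * vector_derivative \<gamma> (at t)) integrable_on {0..1}"
    using locally_holomorphic_along_integral_bound[OF vp] by metis
  have "(\<lambda>z. 1 / (z - u $ i)) holomorphic_on - range (($) u)"
    by (intro holomorphic_intros) auto
  from L[OF this] show ?thesis by (simp add: field_simps)
qed

lemma sum_period_integral_eq_0:
  fixes \<gamma> :: "real \<Rightarrow> complex" and V :: "complex ^ 'n \<Rightarrow> real \<Rightarrow> complex" and n :: int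
  assumes vp: "valid_path \<gamma>" and cV: "continuous_on {0..1} (V u)"
    and sqV: "\<And>t. t \<in> {0..1} \<Longrightarrow> (V u t)\<^sup>2 = branch_poly u (\<gamma> t)"
    and avoids: "\<And>t k. t \<in> {0..1} \<Longrightarrow> \<gamma> t \<noteq> u $ k"
    and closed: "V u 1 = V u 0" and n: "n \<noteq> 0"
  shows "(\<Sum>i\<in>UNIV. period_integral \<gamma> V n i u) = 0"
proof -
  obtain S where S: "finite S"
    and d\<gamma>: "\<And>t. t \<in> {0..1} - S \<Longrightarrow> (\<gamma> has_vector_derivative vector_derivative \<gamma> (at t)) (at t)"
    using valid_path_has_vector_derivative[OF vp] by blast
  have c\<gamma>: "continuous_on {0..1} \<gamma>" using vp valid_path_imp_path path_def by blast
  have V_nz: "V u t \<noteq> 0" if "t \<in> {0..1}" for t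
    using sqV[OF that] branch_poly_nonzero avoids[OF that] by fastforce
  define F where "F t = 2 / of_int n * V u t powi n" for t
  define f where "f i t = V u t powi n * vector_derivative \<gamma> (at t) / (\<gamma> t - u $ i)" for i t
  have F': "(F has_vector_derivative (\<Sum>i\<in>UNIV. f i t)) (at t)" if t: "t \<in> {0<..<1} - S" for t
  proof -
    have t01: "t \<in> {0..1}" using t by auto
    have "((\<lambda>w. 2 / of_int n * w powi n) has_field_derivative 2 * V u t powi (n - 1)) (at (V u t))"
      using n V_nz[OF t01] by (auto intro!: derivative_eq_intros)
    from field_vector_diff_chain_at[OF sqrt_lift_has_vector_derivative[OF c\<gamma> cV sqV avoids _ d\<gamma>] this]
    have "(F has_vector_derivative vector_derivative \<gamma> (at t) *
        (V u t * (\<Sum>k\<in>UNIV. 1 / (\<gamma> t - u $ k)) / 2) * (2 * V u t powi (n - 1))) (at t)"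
      using t by (auto simp: F_def[abs_def] o_def)
    moreover have "vector_derivative \<gamma> (at t) * (V u t * (\<Sum>k\<in>UNIV. 1 / (\<gamma> t - u $ k)) / 2) *
        (2 * V u t powi (n - 1)) =
        vector_derivative \<gamma> (at t) * (V u t powi (n - 1) * V u t) * (\<Sum>k\<in>UNIV. 1 / (\<gamma> t - u $ k))"
      by (simp add: field_simps)
    also have "V u t powi (n - 1) * V u t = V u t powi n"
      using power_int_add_1[of "V u t" "n - 1"] V_nz[OF t01] by simp
    also have "vector_derivative \<gamma> (at t) * V u t powi n * (\<Sum>k\<in>UNIV. 1 / (\<gamma> t - u $ k)) =
        (\<Sum>i\<in>UNIV. f i t)"
      by (simp add: f_def sum_distrib_left mult_ac)
    ultimately show ?thesis by simp
  qed
  have "continuous_on {0..1} F"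
    unfolding F_def[abs_def] using V_nz by (intro continuous_intros cV) auto
  then have "((\<lambda>t. \<Sum>i\<in>UNIV. f i t) has_integral (F 1 - F 0)) {0..1}"
    using F' by (intro fundamental_theorem_of_calculus_interior_strong[OF S]) auto
  moreover have "integral {0..1} (\<lambda>t. \<Sum>i\<in>UNIV. f i t) = (\<Sum>i\<in>UNIV. period_integral \<gamma> V n i u)"
    using period_integrand_integrable[where V = V and u = u, OF vp cV sqV avoids]
    by (simp add: integral_sum f_def period_integral_def)
  ultimately show ?thesis using closed by (simp add: F_def integral_unique)
qed

lemma vec_upd_nth [simp]: "vec_upd u j w $ k = (if k = j then w else u $ k)"
  by (simp add: vec_upd_def)

lemma vec_upd_same [simp]: "vec_upd u j (u $ j) = u"
  by (simp add: vec_eq_iff)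

lemma dist_vec_upd: "dist (vec_upd u j w) u \<le> dist w (u $ j)"
proof -
  have "dist (vec_upd u j w) u = L2_set (\<lambda>k. dist (vec_upd u j w $ k) (u $ k)) UNIV"
    by (simp add: dist_vec_def)
  also have "\<dots> \<le> (\<Sum>k\<in>UNIV. dist (vec_upd u j w $ k) (u $ k))"
    by (rule L2_set_le_sum) simp
  also have "\<dots> = (\<Sum>k\<in>UNIV. if k = j then dist w (u $ j) else 0)"
    by (rule sum.cong) auto
  finally show ?thesis by simp
qed

lemma continuous_on_vec_upd [continuous_intros]:
  "continuous_on S f \<Longrightarrow> continuous_on S (\<lambda>x. vec_upd u j (f x))"
  unfolding vec_upd_def
proof (intro continuous_on_vec_lambda)
  fix k assume "continuous_on S f"
  then show "continuous_on S (\<lambda>x. if k = j then f x else u $ k)" by (cases "k = j") auto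
qed

lemma branch_poly_vec_upd:
  fixes u :: "complex ^ 'n"
  assumes "z \<noteq> u $ j"
  shows "branch_poly (vec_upd u j w) z = (z - w) / (z - u $ j) * branch_poly u z"
proof -
  have split: "branch_poly v z = (z - v $ j) * (\<Prod>k\<in>UNIV - {j}. z - v $ k)" for v :: "complex ^ 'n"
    unfolding branch_poly_def by (simp add: prod.remove)
  show ?thesis using assms unfolding split[of "vec_upd u j w"] split[of u] by simp
qed

lemma continuous_on_Times_slice:
  assumes "continuous_on (A \<times> T) (\<lambda>(x, t). f x t)" and "x \<in> A"
  shows "continuous_on T (f x)"
proof -
  have "continuous_on T (\<lambda>t. (x, t))" by (intro continuous_intros)
  then show ?thesis using continuous_on_compose2[OF assms(1), of T "\<lambda>t. (x, t)"] assms(2) by auto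
qed

lemma norm_one_minus_ratio:
  fixes z w c :: complex
  assumes "z \<noteq> c"
  shows "norm (1 - (z - w) / (z - c)) = norm (w - c) / norm (z - c)"
proof -
  have "1 - (z - w) / (z - c) = (w - c) / (z - c)" using assms by (simp add: field_simps)
  then show ?thesis by (simp add: norm_divide)
qed

lemma lift_vec_upd_eq:
  fixes \<gamma> :: "real \<Rightarrow> complex" and V :: "complex ^ 'n \<Rightarrow> real \<Rightarrow> complex"
  assumes cV: "continuous_on (U \<times> {0..1}) (\<lambda>(v, t). V v t)"
    and sqV: "\<And>v t. v \<in> U \<Longrightarrow> t \<in> {0..1} \<Longrightarrow> (V v t)\<^sup>2 = branch_poly v (\<gamma> t)"
    and c\<gamma>: "continuous_on {0..1} \<gamma>" and u: "u \<in> U"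
    and avoids: "\<And>t k. t \<in> {0..1} \<Longrightarrow> \<gamma> t \<noteq> u $ k"
    and B: "connected B" "u $ j \<in> B" "\<And>w. w \<in> B \<Longrightarrow> vec_upd u j w \<in> U"
    and small: "\<And>w t. w \<in> B \<Longrightarrow> t \<in> {0..1} \<Longrightarrow> norm (w - u $ j) < norm (\<gamma> t - u $ j)"
    and w: "w \<in> B" and t: "t \<in> {0..1}"
  shows "V (vec_upd u j w) t = csqrt ((\<gamma> t - w) / (\<gamma> t - u $ j)) * V u t"
proof -
  define X where "X = B \<times> {0..1::real}"
  define q where "q x = (\<gamma> (snd x) - fst x) / (\<gamma> (snd x) - u $ j)" for x
  have q_near_1: "norm (1 - q x) < 1" if "x \<in> X" for x
  proof -
    have x: "fst x \<in> B" "snd x \<in> {0..1}" using that by (auto simp: X_def)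
    then have "\<gamma> (snd x) \<noteq> u $ j" using avoids by blast
    then show ?thesis
      using small[OF x] by (simp add: q_def norm_one_minus_ratio)
  qed
  have cq: "continuous_on X q"
    unfolding q_def using avoids
    by (intro continuous_intros continuous_on_compose2[OF c\<gamma>]) (auto simp: X_def)
  note q_pos = Re_pos_if_norm_one_minus_less[OF q_near_1]
  have V_nz: "V u s \<noteq> 0" if "s \<in> {0..1}" for s
    using sqV[OF u that] branch_poly_nonzero avoids[OF that] by fastforce
  have cVu: "continuous_on {0..1} (V u)" by (rule continuous_on_Times_slice[OF cV u])
  define a where "a x = V (vec_upd u j (fst x)) (snd x)" for x
  define b where "b x = csqrt (q x) * V u (snd x)" for x
  have "a (w, t) = b (w, t)"
  proof (rule continuous_square_roots_eq[of X a b "(u $ j, 0)"])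
    show "connected X"
      unfolding X_def by (intro connected_Times B(1) convex_connected) (simp add: convex_real_interval)
    show "continuous_on X a"
      unfolding a_def using B(3)
      by (intro continuous_on_compose2[OF cV, of X "\<lambda>x. (vec_upd u j (fst x), snd x)", simplified])
         (auto simp: X_def intro!: continuous_intros)
    show "continuous_on X b"
      unfolding b_def using q_pos(2)
      by (intro continuous_intros continuous_on_compose2[OF continuous_on_csqrt cq]
          continuous_on_compose2[OF cVu]) (auto simp: X_def)
    show "(a x)\<^sup>2 = (b x)\<^sup>2" "b x \<noteq> 0" if "x \<in> X" for x
    proof -
      have x: "fst x \<in> B" "snd x \<in> {0..1}" using that by (auto simp: X_def)
      have "(a x)\<^sup>2 = q x * branch_poly u (\<gamma> (snd x))"
        unfolding a_def q_def using sqV[OF B(3)[OF x(1)] x(2)] branch_poly_vec_upd[OF avoids[OF x(2)]]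
        by simp
      also have "\<dots> = (b x)\<^sup>2"
        unfolding b_def using sqV[OF u x(2)] by (simp add: power_mult_distrib)
      finally show "(a x)\<^sup>2 = (b x)\<^sup>2" .
      show "b x \<noteq> 0" using q_pos(1)[OF that] V_nz[OF x(2)] by (auto simp: b_def)
    qed
    show "(u $ j, 0) \<in> X" "(w, t) \<in> X" using B(2) w t by (auto simp: X_def)
    show "a (u $ j, 0) = b (u $ j, 0)"
      using avoids[of 0 j] by (simp add: a_def b_def q_def)
  qed
  then show ?thesis by (simp add: a_def b_def q_def)
qed

lemma branch_point_free_neighbourhood:
  fixes \<gamma> :: "real \<Rightarrow> complex" and u :: "complex ^ 'n"
  assumes "path \<gamma>" and "\<And>t k. t \<in> {0..1} \<Longrightarrow> \<gamma> t \<noteq> u $ k"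
  obtains e \<Omega> where "e > 0" "open \<Omega>" "\<And>t. t \<in> {0..1} \<Longrightarrow> \<gamma> t \<in> \<Omega>"
    "\<And>z k. z \<in> \<Omega> \<Longrightarrow> e < norm (z - u $ k)"
proof -
  have disj: "path_image \<gamma> \<inter> range (($) u) = {}" using assms(2) by (auto simp: path_image_def)
  have closed: "closed (range (($) u))" by (simp add: finite_imp_closed)
  obtain d where d: "d > 0" "\<forall>x\<in>path_image \<gamma>. \<forall>y\<in>range (($) u). d \<le> dist x y"
    using separate_compact_closed[OF compact_path_image[OF assms(1)] closed disj] by blast
  define e where "e = d / 2"
  show ?thesis
  proof (rule that[of e "- (\<Union>k. cball (u $ k) e)"])
    show "e > 0" "open (- (\<Union>k. cball (u $ k) e))" using d(1) by (auto simp: e_def intro!: closed_UN)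
    fix t :: real assume "t \<in> {0..1}"
    then have dk: "d \<le> dist (\<gamma> t) (u $ k)" for k using d(2) by (auto simp: path_image_def)
    have "e < dist (u $ k) (\<gamma> t)" for k using dk[of k] d(1) by (simp add: e_def dist_commute)
    then show "\<gamma> t \<in> - (\<Union>k. cball (u $ k) e)" by (auto simp: not_le)
  qed (auto simp: dist_norm norm_minus_commute not_le)
qed

lemma holomorphic_on_csqrt_ratio_powi:
  fixes c w :: complex
  assumes close: "\<And>z. z \<in> \<Omega> \<Longrightarrow> norm (w - c) < norm (z - c)"
  shows "(\<lambda>z. csqrt ((z - w) / (z - c)) powi n) holomorphic_on \<Omega>"
proof -
  have ne: "z \<noteq> c" if "z \<in> \<Omega>" for z using close[OF that] by auto
  have "norm (1 - (z - w) / (z - c)) < 1" if "z \<in> \<Omega>" for z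
    using close[OF that] ne[OF that] by (simp add: norm_one_minus_ratio)
  note pos = Re_pos_if_norm_one_minus_less[OF this]
  have "(csqrt \<circ> (\<lambda>z. (z - w) / (z - c))) holomorphic_on \<Omega>"
    by (rule holomorphic_on_compose_gen[OF _ holomorphic_on_csqrt])
       (use ne pos in \<open>auto intro!: holomorphic_intros\<close>)
  moreover have "csqrt ((z - w) / (z - c)) \<noteq> 0" if "z \<in> \<Omega>" for z
    using pos(1)[OF that] by auto
  ultimately show ?thesis by (intro holomorphic_on_power_int) (auto simp: o_def)
qed

lemma csqrt_powi_first_order_approx:
  assumes "\<epsilon> > 0"
  obtains \<delta> where "\<delta> > 0"
    "\<And>x. norm x < \<delta> \<Longrightarrow> norm (csqrt (1 - x) powi n - 1 + of_int n / 2 * x) \<le> \<epsilon> * norm x"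
proof -
  have "((\<lambda>x. csqrt (1 - x)) has_field_derivative - 1 / (2 * csqrt (1 - 0))) (at 0)"
    by (rule has_field_derivative_csqrt') (auto intro!: derivative_eq_intros)
  from DERIV_power_int[OF this, of n]
  have "((\<lambda>x. csqrt (1 - x) powi n) has_field_derivative - (of_int n / 2)) (at 0)" by simp
  then obtain \<delta> where "\<delta> > 0"
    "\<And>x. norm (x - 0) < \<delta> \<Longrightarrow>
       norm (csqrt (1 - x) powi n - csqrt (1 - 0) powi n - - (of_int n / 2) * (x - 0)) \<le> \<epsilon> * norm (x - 0)"
    using assms unfolding has_field_derivative_def has_derivative_at_alt by blast
  then show ?thesis using that by simp
qed

lemma csqrt_ratio_powi_uniform_approx:
  fixes c a :: complex
  assumes e: "e > 0" and \<epsilon>: "\<epsilon> > 0"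
  obtains \<delta> where "\<delta> > 0"
    "\<And>w z. norm (w - c) < \<delta> \<Longrightarrow> e < norm (z - c) \<Longrightarrow> e < norm (z - a) \<Longrightarrow>
       norm (csqrt ((z - w) / (z - c)) powi n / (z - a) - csqrt ((z - c) / (z - c)) powi n / (z - a)
             - (w - c) * (- (of_int n / 2) / ((z - c) * (z - a)))) \<le> \<epsilon> * norm (w - c)"
proof -
  obtain \<delta> where \<delta>: "\<delta> > 0"
    "\<And>x. norm x < \<delta> \<Longrightarrow> norm (csqrt (1 - x) powi n - 1 + of_int n / 2 * x) \<le> \<epsilon> * e\<^sup>2 * norm x"
    using csqrt_powi_first_order_approx[of "\<epsilon> * e\<^sup>2" n] \<epsilon> e by auto
  show ?thesis
  proof (rule that[of "\<delta> * e"])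
    show "\<delta> * e > 0" using \<delta>(1) e by simp
    fix w z assume w: "norm (w - c) < \<delta> * e" and zc: "e < norm (z - c)" and za: "e < norm (z - a)"
    define x where "x = (w - c) / (z - c)"
    have ne: "z \<noteq> c" "z \<noteq> a" using zc za e by auto
    have nx: "norm x \<le> norm (w - c) / e"
    proof -
      have "0 < norm (z - c) * e" using ne e by (simp add: zero_less_mult_iff)
      then show ?thesis unfolding x_def norm_divide using zc by (intro divide_left_mono) auto
    qed
    also have "\<dots> < \<delta>" using w e by (simp add: field_simps)
    finally have "norm (csqrt (1 - x) powi n - 1 + of_int n / 2 * x) \<le> \<epsilon> * e\<^sup>2 * norm x"
      by (rule \<delta>(2))
    also have "\<dots> \<le> \<epsilon> * e\<^sup>2 * (norm (w - c) / e)"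
      using \<epsilon> nx by (intro mult_left_mono) auto
    also have "\<dots> = \<epsilon> * e * norm (w - c)" using e by (simp add: power2_eq_square)
    finally have num: "norm (csqrt (1 - x) powi n - 1 + of_int n / 2 * x) \<le> \<epsilon> * e * norm (w - c)" .
    have "(z - w) / (z - c) = 1 - x" "(z - c) / (z - c) = 1"
      "(w - c) * (- (of_int n / 2) / ((z - c) * (z - a))) = - (of_int n / 2 * x) / (z - a)"
      using ne by (simp_all add: x_def field_simps)
    then have "csqrt ((z - w) / (z - c)) powi n / (z - a) - csqrt ((z - c) / (z - c)) powi n / (z - a)
        - (w - c) * (- (of_int n / 2) / ((z - c) * (z - a)))
        = (csqrt (1 - x) powi n - 1 + of_int n / 2 * x) / (z - a)"
      by (simp add: diff_divide_distrib add_divide_distrib)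
    also have "norm \<dots> \<le> \<epsilon> * e * norm (w - c) / e"
      unfolding norm_divide using num za e \<epsilon> by (intro frac_le) auto
    finally show "norm (csqrt ((z - w) / (z - c)) powi n / (z - a) - csqrt ((z - c) / (z - c)) powi n / (z - a)
        - (w - c) * (- (of_int n / 2) / ((z - c) * (z - a)))) \<le> \<epsilon> * norm (w - c)"
      using e by simp
  qed
qed

lemma partial_fractions_two_poles:
  fixes z a c m :: complex
  assumes "z \<noteq> a" "z \<noteq> c" "a \<noteq> c"
  shows "- m / ((z - c) * (z - a)) = m / (c - a) * (1 / (z - a) - 1 / (z - c))"
proof -
  have "z - a \<noteq> 0" "z - c \<noteq> 0" "c - a \<noteq> 0" using assms by auto
  then show ?thesis by (simp add: divide_simps) (simp add: algebra_simps)
qed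

lemma period_integral_partial_fractions:
  fixes \<gamma> :: "real \<Rightarrow> complex" and V :: "complex ^ 'n \<Rightarrow> real \<Rightarrow> complex" and n :: int
  assumes vp: "valid_path \<gamma>" and cV: "continuous_on {0..1} (V u)"
    and sqV: "\<And>t. t \<in> {0..1} \<Longrightarrow> (V u t)\<^sup>2 = branch_poly u (\<gamma> t)"
    and avoids: "\<And>t k. t \<in> {0..1} \<Longrightarrow> \<gamma> t \<noteq> u $ k"
    and ij: "u $ i \<noteq> u $ j"
  shows "integral {0..1} (\<lambda>t. - (of_int n / 2) / ((\<gamma> t - u $ j) * (\<gamma> t - u $ i)) * V u t powi n *
            vector_derivative \<gamma> (at t))
         = of_int n / 2 * (period_integral \<gamma> V n i u - period_integral \<gamma> V n j u) / (u $ j - u $ i)"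
proof -
  define f where "f k t = V u t powi n * vector_derivative \<gamma> (at t) / (\<gamma> t - u $ k)" for k t
  have "integral {0..1} (\<lambda>t. - (of_int n / 2) / ((\<gamma> t - u $ j) * (\<gamma> t - u $ i)) * V u t powi n *
          vector_derivative \<gamma> (at t))
      = integral {0..1} (\<lambda>t. of_int n / 2 / (u $ j - u $ i) * (f i t - f j t))"
  proof (rule integral_cong)
    fix t :: real assume "t \<in> {0..1}"
    then have "\<gamma> t \<noteq> u $ i" "\<gamma> t \<noteq> u $ j" using avoids by auto
    define M where "M = of_int n / 2 / (u $ j - u $ i)"
    have pf: "- (of_int n / 2) / ((\<gamma> t - u $ j) * (\<gamma> t - u $ i)) =
        M * (1 / (\<gamma> t - u $ i) - 1 / (\<gamma> t - u $ j))"
      unfolding M_def using \<open>\<gamma> t \<noteq> u $ i\<close> \<open>\<gamma> t \<noteq> u $ j\<close> ij by (intro partial_fractions_two_poles) auto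
    show "- (of_int n / 2) / ((\<gamma> t - u $ j) * (\<gamma> t - u $ i)) * V u t powi n * vector_derivative \<gamma> (at t)
        = of_int n / 2 / (u $ j - u $ i) * (f i t - f j t)"
      unfolding pf M_def[symmetric] f_def by (simp add: algebra_simps)
  qed
  also have "\<dots> = of_int n / 2 * (integral {0..1} (f i) - integral {0..1} (f j)) / (u $ j - u $ i)"
  proof -
    have "f k integrable_on {0..1}" for k
      unfolding f_def by (rule period_integrand_integrable[where V = V and u = u, OF vp cV sqV avoids])
    then show ?thesis by (simp add: integral_diff)
  qed
  finally show ?thesis unfolding f_def[abs_def] period_integral_def .
qed

lemma branch_factor_integral_has_field_derivative:
  fixes \<gamma> K :: "real \<Rightarrow> complex" and a c :: complex and n :: int
  assumes vp: "valid_path \<gamma>" and K: "locally_holomorphic_along \<Omega> \<gamma> K" and e: "e > 0"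
    and far: "\<And>z. z \<in> \<Omega> \<Longrightarrow> e < norm (z - c) \<and> e < norm (z - a)"
  shows "((\<lambda>w. integral {0..1} (\<lambda>t. csqrt ((\<gamma> t - w) / (\<gamma> t - c)) powi n / (\<gamma> t - a) * K t *
            vector_derivative \<gamma> (at t))) has_field_derivative
          integral {0..1} (\<lambda>t. - (of_int n / 2) / ((\<gamma> t - c) * (\<gamma> t - a)) * K t *
            vector_derivative \<gamma> (at t))) (at c)"
proof -
  define h where "h w z = csqrt ((z - w) / (z - c)) powi n / (z - a)" for w z
  define D where "D z = - (of_int n / 2) / ((z - c) * (z - a))" for z
  have off: "z \<noteq> c" "z \<noteq> a" if "z \<in> \<Omega>" for z using far[OF that] e by auto
  have "((\<lambda>w. integral {0..1} (\<lambda>t. h w (\<gamma> t) * K t * vector_derivative \<gamma> (at t))) has_field_derivative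
           integral {0..1} (\<lambda>t. D (\<gamma> t) * K t * vector_derivative \<gamma> (at t))) (at c)"
  proof (rule has_field_derivative_weighted_integral[OF vp K _ _ half_gt_zero[OF e]])
    show "h w holomorphic_on \<Omega>" if "w \<in> ball c (e / 2)" for w
    proof -
      have "norm (w - c) < norm (z - c)" if "z \<in> \<Omega>" for z
        using \<open>w \<in> ball c (e / 2)\<close> far[OF that] e by (simp add: dist_norm norm_minus_commute)
      then show ?thesis
        unfolding h_def using off by (intro holomorphic_intros holomorphic_on_csqrt_ratio_powi) auto
    qed
    show "D holomorphic_on \<Omega>" unfolding D_def using off by (intro holomorphic_intros) auto
    fix \<epsilon> :: real assume "\<epsilon> > 0"
    obtain \<delta> where \<delta>: "\<delta> > 0" and approx: "\<And>w z. norm (w - c) < \<delta> \<Longrightarrow> e < norm (z - c) \<Longrightarrow>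
        e < norm (z - a) \<Longrightarrow> norm (h w z - h c z - (w - c) * D z) \<le> \<epsilon> * norm (w - c)"
      unfolding h_def D_def
      using csqrt_ratio_powi_uniform_approx[OF e \<open>\<epsilon> > 0\<close>, where c = c and a = a and n = n] by blast
    show "\<exists>\<delta>>0. \<forall>w z. norm (w - c) < \<delta> \<longrightarrow> z \<in> \<Omega> \<longrightarrow>
        norm (h w z - h c z - (w - c) * D z) \<le> \<epsilon> * norm (w - c)"
      using \<delta> approx far by blast
  qed
  then show ?thesis by (simp add: h_def D_def)
qed

lemma period_integral_has_field_derivative:
  fixes \<gamma> :: "real \<Rightarrow> complex" and V :: "complex ^ 'n \<Rightarrow> real \<Rightarrow> complex" and n :: int
  assumes U: "open U" "u \<in> U" and vp: "valid_path \<gamma>"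
    and cV: "continuous_on (U \<times> {0..1}) (\<lambda>(v, t). V v t)"
    and sqV: "\<And>v t. v \<in> U \<Longrightarrow> t \<in> {0..1} \<Longrightarrow> (V v t)\<^sup>2 = branch_poly v (\<gamma> t)"
    and avoids: "\<And>t k. t \<in> {0..1} \<Longrightarrow> \<gamma> t \<noteq> u $ k"
    and ij: "u $ i \<noteq> u $ j"
  shows "((\<lambda>w. period_integral \<gamma> V n i (vec_upd u j w)) has_field_derivative
           of_int n / 2 * (period_integral \<gamma> V n i u - period_integral \<gamma> V n j u) / (u $ j - u $ i))
         (at (u $ j))"
proof -
  have c\<gamma>: "continuous_on {0..1} \<gamma>" using vp valid_path_imp_path path_def by blast
  have cVu: "continuous_on {0..1} (V u)" by (rule continuous_on_Times_slice[OF cV U(2)])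
  obtain e \<Omega> where e: "e > 0" and \<Omega>: "open \<Omega>" and path: "\<And>t. t \<in> {0..1} \<Longrightarrow> \<gamma> t \<in> \<Omega>"
    and far: "\<And>z k. z \<in> \<Omega> \<Longrightarrow> e < norm (z - u $ k)"
    using branch_point_free_neighbourhood[OF valid_path_imp_path[OF vp] avoids] by blast
  have off: "z \<noteq> u $ k" if "z \<in> \<Omega>" for z k using far[OF that, of k] e by auto
  have lh: "locally_holomorphic_along \<Omega> \<gamma> (\<lambda>t. V u t powi n)"
    using off by (intro sqrt_lift_powi_locally_holomorphic_along[OF c\<gamma> cVu sqV[OF U(2)]
        holomorphic_on_branch_poly \<Omega> _ path] branch_poly_nonzero)
  have "((\<lambda>w. integral {0..1} (\<lambda>t. csqrt ((\<gamma> t - w) / (\<gamma> t - u $ j)) powi n /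
        (\<gamma> t - u $ i) * V u t powi n * vector_derivative \<gamma> (at t))) has_field_derivative
      integral {0..1} (\<lambda>t. - (of_int n / 2) / ((\<gamma> t - u $ j) * (\<gamma> t - u $ i)) * V u t powi n *
        vector_derivative \<gamma> (at t))) (at (u $ j))"
    by (rule branch_factor_integral_has_field_derivative[OF vp lh e]) (use far in auto)
  then have deriv: "((\<lambda>w. integral {0..1} (\<lambda>t. csqrt ((\<gamma> t - w) / (\<gamma> t - u $ j)) powi n /
        (\<gamma> t - u $ i) * V u t powi n * vector_derivative \<gamma> (at t))) has_field_derivative
      of_int n / 2 * (period_integral \<gamma> V n i u - period_integral \<gamma> V n j u) / (u $ j - u $ i)) (at (u $ j))"
    by (simp only: period_integral_partial_fractions[where V = V and u = u, OF vp cVu sqV[OF U(2)] avoids ij])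
  obtain \<rho> where \<rho>: "\<rho> > 0" "ball u \<rho> \<subseteq> U" using U open_contains_ball by blast
  define r where "r = min \<rho> (e / 2)"
  have r: "u $ j \<in> ball (u $ j) r" using \<rho>(1) e by (simp add: r_def)
  have "integral {0..1} (\<lambda>t. csqrt ((\<gamma> t - w) / (\<gamma> t - u $ j)) powi n / (\<gamma> t - u $ i) *
        V u t powi n * vector_derivative \<gamma> (at t)) = period_integral \<gamma> V n i (vec_upd u j w)"
    if w: "w \<in> ball (u $ j) r" for w
    unfolding period_integral_def
  proof (rule integral_cong)
    fix t :: real assume t: "t \<in> {0..1}"
    have "vec_upd u j w' \<in> U" if "w' \<in> ball (u $ j) r" for w'
      using dist_vec_upd[of u j w'] that \<rho>(2) by (auto simp: r_def dist_commute)
    moreover have "norm (w' - u $ j) < norm (\<gamma> s - u $ j)" if "w' \<in> ball (u $ j) r" "s \<in> {0..1}" for w' s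
      using that far[OF path[OF that(2)], of j] e by (simp add: r_def dist_norm norm_minus_commute)
    ultimately have "V (vec_upd u j w) t = csqrt ((\<gamma> t - w) / (\<gamma> t - u $ j)) * V u t"
      using r w t by (intro lift_vec_upd_eq[OF cV sqV c\<gamma> U(2) avoids, where B = "ball (u $ j) r"]) auto
    then show "csqrt ((\<gamma> t - w) / (\<gamma> t - u $ j)) powi n / (\<gamma> t - u $ i) * V u t powi n *
        vector_derivative \<gamma> (at t) =
        V (vec_upd u j w) t powi n * vector_derivative \<gamma> (at t) / (\<gamma> t - vec_upd u j w $ i)"
      using ij by (auto simp: power_int_mult_distrib)
  qed
  from has_field_derivative_transform_within_open[OF deriv open_ball r this] show ?thesis .
qed

theorem theorem1:
  fixes \<gamma> :: "real \<Rightarrow> complex"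
    and V :: "complex ^ 'n \<Rightarrow> real \<Rightarrow> complex"
    and U :: "(complex ^ 'n) set"
    and n :: int and g :: nat
  assumes "CARD('n) = 2 * g + 1" and "g \<ge> 1" and "n \<noteq> 0"
    and "open U"
    and "\<forall>u\<in>U. \<forall>j k. j \<noteq> k \<longrightarrow> u $ j \<noteq> u $ k"
    and "valid_path \<gamma>" and "pathfinish \<gamma> = pathstart \<gamma>"
    and "\<forall>u\<in>U. \<forall>t\<in>{0..1}. \<forall>k. \<gamma> t \<noteq> u $ k"
    and "continuous_on (U \<times> {0..1}) (\<lambda>(u, t). V u t)"
    and "\<forall>u\<in>U. \<forall>t\<in>{0..1}. (V u t)\<^sup>2 = branch_poly u (\<gamma> t)"
    and "\<forall>u\<in>U. V u 1 = V u 0"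
  shows "\<forall>u\<in>U.
     (\<forall>i j. i \<noteq> j \<longrightarrow>
        ((\<lambda>w. period_integral \<gamma> V n i (vec_upd u j w)) has_field_derivative
          (of_int n / 2 * (period_integral \<gamma> V n i u - period_integral \<gamma> V n j u) / (u $ j - u $ i)))
        (at (u $ j)))
     \<and> (\<Sum>i\<in>UNIV. period_integral \<gamma> V n i u) = 0"
proof (intro ballI conjI allI impI)
  fix u assume u: "u \<in> U"
  have sqV: "\<And>v t. v \<in> U \<Longrightarrow> t \<in> {0..1} \<Longrightarrow> (V v t)\<^sup>2 = branch_poly v (\<gamma> t)"
    using assms(10) by blast
  have avoids: "\<And>t k. t \<in> {0..1} \<Longrightarrow> \<gamma> t \<noteq> u $ k" using assms(8) u by blast
  fix i j :: 'n assume "i \<noteq> j"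
  then have "u $ i \<noteq> u $ j" using assms(5) u by blast
  then show "((\<lambda>w. period_integral \<gamma> V n i (vec_upd u j w)) has_field_derivative
      (of_int n / 2 * (period_integral \<gamma> V n i u - period_integral \<gamma> V n j u) / (u $ j - u $ i)))
      (at (u $ j))"
    using period_integral_has_field_derivative[OF assms(4) u assms(6,9) sqV avoids]
    by blast
next
  fix u assume u: "u \<in> U"
  show "(\<Sum>i\<in>UNIV. period_integral \<gamma> V n i u) = 0"
  proof (rule sum_period_integral_eq_0[where V = V and u = u,
        OF assms(6) continuous_on_Times_slice[OF assms(9) u]])
    show "(V u t)\<^sup>2 = branch_poly u (\<gamma> t)" if "t \<in> {0..1}" for t using assms(10) u that by blast
    show "\<gamma> t \<noteq> u $ k" if "t \<in> {0..1}" for t k using assms(8) u that by blast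
  qed (use assms(3,11) u in auto)
qed

end
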